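(* Let $\mathbf{X}$ be a real or complex Banach space and let $\mathcal{A}(\mathbf{X})$ be a unital standard operator algebra on $\mathbf{X}$. If $\phi:\mathcal{A}(\mathbf{X})\to\mathcal{A}(\mathbf{X})$ is a linear mapping such that $\phi(A)\circ B+A\circ\phi(B)=0$ for all $A,B\in\mathcal{A}(\mathbf{X})$ with $AB=BA=0$, then there exist a derivation $\delta$ and a multiplier $\eta$ on $\mathcal{A}(\mathbf{X})$ such that $\phi=\delta+\eta$. If moreover $\phi(I)=0$, then $\phi$ is a derivation.
   Context: $\mathcal{B}(\mathbf{X})$ is the algebra of bounded linear operators on $\mathbf{X}$ and $\mathcal{F}(\mathbf{X})$ the ideal of finite rank operators. A subalgebra $\mathcal{A}(\mathbf{X})\subseteq\mathcal{B}(\mathbf{X})$ is standard if $\mathcal{F}(\mathbf{X})\subseteq\mathcal{A}(\mathbf{X})$; unital means it contains the identity $I$. $X\circ Y=XY+YX$. A linear $\delta$ is a derivation if $\delta(XY)=\delta(X)Y+X\delta(Y)$; a linear $\eta$ is a multiplier if $\eta(X)=\eta(I)X=X\eta(I)$ for all $X$. *)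

theory Defs
  imports "HOL-Analysis.Analysis"
begin

text \<open>A real Banach space is a type of class banach.
  A complex Banach space is a real Banach space together with a complex structure J
  (multiplication by i), such that (a + i b) x = a x + b J x has norm |a + i b| * norm x.
  The scalar data is a set C of operators: C = {} (real case) or C = {J} (complex case).
  K-linearity = real linearity plus commuting with every J in C.\<close>

definition complex_structure :: "('a::banach \<Rightarrow> 'a) \<Rightarrow> bool" where
  "complex_structure J \<longleftrightarrow> bounded_linear J \<and> (\<forall>x. J (J x) = - x) \<and>
     (\<forall>a b x. norm (a *\<^sub>R x + b *\<^sub>R J x) = sqrt (a\<^sup>2 + b\<^sup>2) * norm x)"

definition scalar_data :: "('a::banach \<Rightarrow> 'a) set \<Rightarrow> bool" where
  "scalar_data C \<longleftrightarrow> C = {} \<or> (\<exists>J. complex_structure J \<and> C = {J})"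

definition bops :: "('a::banach \<Rightarrow> 'a) set \<Rightarrow> ('a \<Rightarrow> 'a) set" where
  "bops C = {T. bounded_linear T \<and> (\<forall>J\<in>C. T \<circ> J = J \<circ> T)}"

definition fin_rank :: "('a::banach \<Rightarrow> 'a) set \<Rightarrow> ('a \<Rightarrow> 'a) set" where
  "fin_rank C = {T \<in> bops C. \<exists>S. finite S \<and> range T \<subseteq> span S}"

definition unital_standard_algebra :: "('a::banach \<Rightarrow> 'a) set \<Rightarrow> ('a \<Rightarrow> 'a) set \<Rightarrow> bool" where
  "unital_standard_algebra C \<A> \<longleftrightarrow>
     \<A> \<subseteq> bops C \<and> fin_rank C \<subseteq> \<A> \<and> id \<in> \<A> \<and>
     (\<forall>S\<in>\<A>. \<forall>T\<in>\<A>. (\<lambda>x. S x + T x) \<in> \<A>) \<and>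
     (\<forall>S\<in>\<A>. \<forall>T\<in>\<A>. S \<circ> T \<in> \<A>) \<and>
     (\<forall>c. \<forall>T\<in>\<A>. (\<lambda>x. c *\<^sub>R T x) \<in> \<A>) \<and>
     (\<forall>J\<in>C. \<forall>T\<in>\<A>. J \<circ> T \<in> \<A>)"

definition alg_linear :: "('a::banach \<Rightarrow> 'a) set \<Rightarrow> ('a \<Rightarrow> 'a) set \<Rightarrow>
    (('a \<Rightarrow> 'a) \<Rightarrow> ('a \<Rightarrow> 'a)) \<Rightarrow> bool" where
  "alg_linear C \<A> f \<longleftrightarrow> (\<forall>T\<in>\<A>. f T \<in> \<A>) \<and>
     (\<forall>S\<in>\<A>. \<forall>T\<in>\<A>. f (\<lambda>x. S x + T x) = (\<lambda>x. f S x + f T x)) \<and>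
     (\<forall>c. \<forall>T\<in>\<A>. f (\<lambda>x. c *\<^sub>R T x) = (\<lambda>x. c *\<^sub>R f T x)) \<and>
     (\<forall>J\<in>C. \<forall>T\<in>\<A>. f (J \<circ> T) = J \<circ> f T)"

definition jordan :: "('a::banach \<Rightarrow> 'a) \<Rightarrow> ('a \<Rightarrow> 'a) \<Rightarrow> ('a \<Rightarrow> 'a)" where
  "jordan S T = (\<lambda>x. S (T x) + T (S x))"

definition is_derivation :: "('a::banach \<Rightarrow> 'a) set \<Rightarrow> ('a \<Rightarrow> 'a) set \<Rightarrow>
    (('a \<Rightarrow> 'a) \<Rightarrow> ('a \<Rightarrow> 'a)) \<Rightarrow> bool" where
  "is_derivation C \<A> d \<longleftrightarrow> alg_linear C \<A> d \<and>
     (\<forall>S\<in>\<A>. \<forall>T\<in>\<A>. d (S \<circ> T) = (\<lambda>x. d S (T x) + S (d T x)))"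

definition is_multiplier :: "('a::banach \<Rightarrow> 'a) set \<Rightarrow> ('a \<Rightarrow> 'a) set \<Rightarrow>
    (('a \<Rightarrow> 'a) \<Rightarrow> ('a \<Rightarrow> 'a)) \<Rightarrow> bool" where
  "is_multiplier C \<A> m \<longleftrightarrow> alg_linear C \<A> m \<and>
     (\<forall>T\<in>\<A>. m T = m id \<circ> T \<and> m T = T \<circ> m id)"

end

(*
  Write c = \<phi>(I). Testing the hypothesis on an idempotent P and I - P shows that c commutes
  with all idempotents; rank-one operators are combinations of rank-one idempotents and form a
  separating left ideal, so c is central. Then D = \<phi> - c\<cdot> vanishes at I and still satisfies the
  hypothesis, which gives D(P) = D(P) P + P D(P) for idempotents P. For a rank-one idempotent P,
  splitting X into its four Peirce corners with respect to P and I - P yields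
  D(X P) = D(X) P + X D(P); hence the Leibniz rule holds against every rank-one operator, and,
  since rank-one operators separate, everywhere. Hahn-Banach provides the rank-one operators.
  Thus \<phi> = D + c\<cdot> with D a derivation and c\<cdot> a multiplier.
*)

theory Submission
  imports Defs
begin

section \<open>Zero product Jordan maps on unital real algebras\<close>

lemma real_vector_double_zero: "(x::'a::real_vector) + x = 0 \<longleftrightarrow> x = 0"
proof
  assume "x + x = 0"
  then have "(2::real) *\<^sub>R x = 0" by (simp add: scaleR_2)
  then show "x = 0" by simp
qed simp

lemma diff_diff_eq_0_iff: "a - b - c = 0 \<longleftrightarrow> a = b + (c::'a::ab_group_add)"
  by (simp add: algebra_simps)

text \<open>The property of rank-one idempotents \<open>P\<close> that is used: \<open>(R P) (P R)\<close> contains no zero divisors.\<close>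

definition minimal_idempotent :: "'r::{real_algebra,monoid_mult} set \<Rightarrow> 'r \<Rightarrow> bool" where
  "minimal_idempotent R P \<longleftrightarrow> P \<in> R \<and> P * P = P \<and>
     (\<forall>S\<in>R. \<forall>T\<in>R. S * P = S \<longrightarrow> P * T = T \<longrightarrow> S * T = 0 \<longrightarrow> S = 0 \<or> T = 0)"

lemma minimal_idempotentD:
  assumes "minimal_idempotent R P"
  shows minimal_idempotent_mem: "P \<in> R" and minimal_idempotent_idem: "P * P = P"
  using assms unfolding minimal_idempotent_def by simp_all

lemma minimal_idempotent_no_zero_divisors:
  assumes "minimal_idempotent R P" "S \<in> R" "T \<in> R" "S * P = S" "P * T = T" "S * T = 0"
  shows "S = 0 \<or> T = 0"
  using assms unfolding minimal_idempotent_def by simp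

locale unital_subalgebra =
  fixes R :: "'r::{real_algebra,monoid_mult} set"
  assumes one_mem: "1 \<in> R"
    and add_mem: "x \<in> R \<Longrightarrow> y \<in> R \<Longrightarrow> x + y \<in> R"
    and mult_mem: "x \<in> R \<Longrightarrow> y \<in> R \<Longrightarrow> x * y \<in> R"
    and scaleR_mem: "x \<in> R \<Longrightarrow> a *\<^sub>R x \<in> R"
begin

lemma uminus_mem: "x \<in> R \<Longrightarrow> - x \<in> R"
  using scaleR_mem[of x "-1"] by simp

lemma diff_mem: "x \<in> R \<Longrightarrow> y \<in> R \<Longrightarrow> x - y \<in> R"
  using add_mem[of x "- y"] uminus_mem[of y] by simp

lemma one_diff_mem: "x \<in> R \<Longrightarrow> 1 - x \<in> R"
  using diff_mem[OF one_mem] .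

end

locale zero_product_jordan_map = unital_subalgebra R
  for R :: "'r::{real_algebra,monoid_mult} set" +
  fixes \<phi> :: "'r \<Rightarrow> 'r"
  assumes map_mem: "x \<in> R \<Longrightarrow> \<phi> x \<in> R"
    and map_add: "x \<in> R \<Longrightarrow> y \<in> R \<Longrightarrow> \<phi> (x + y) = \<phi> x + \<phi> y"
    and map_scaleR: "x \<in> R \<Longrightarrow> \<phi> (a *\<^sub>R x) = a *\<^sub>R \<phi> x"
    and zero_product:
      "A \<in> R \<Longrightarrow> B \<in> R \<Longrightarrow> A * B = 0 \<Longrightarrow> B * A = 0 \<Longrightarrow> \<phi> A * B + B * \<phi> A + A * \<phi> B + \<phi> B * A = 0"
begin

lemma map_uminus: "x \<in> R \<Longrightarrow> \<phi> (- x) = - \<phi> x"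
  using map_scaleR[of x "-1"] by simp

lemma map_diff: "x \<in> R \<Longrightarrow> y \<in> R \<Longrightarrow> \<phi> (x - y) = \<phi> x - \<phi> y"
  using map_add[of x "- y"] map_uminus[of y] uminus_mem[of y] by simp

lemma map_zero: "\<phi> 0 = 0"
  using map_scaleR[OF one_mem, of 0] by simp

text \<open>Both facts about idempotents come from the zero product pair \<open>P\<close>, \<open>1 - P\<close>.\<close>

lemma idempotent_commutes_map_one:
  assumes P: "P \<in> R" "P * P = P"
  shows "P * \<phi> 1 = \<phi> 1 * P"
proof -
  have PP: "P * (P * x) = P * x" for x using P(2) by (simp add: mult.assoc[symmetric])
  define e where "e = \<phi> P * (1 - P) + (1 - P) * \<phi> P + P * \<phi> (1 - P) + \<phi> (1 - P) * P"
  have "e = 0"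
    unfolding e_def using P by (intro zero_product one_diff_mem) (simp_all add: algebra_simps)
  moreover have "P * \<phi> 1 - \<phi> 1 * P = P * e * (1 - P) - (1 - P) * e * P"
    unfolding e_def map_diff[OF one_mem P(1)] by (simp add: algebra_simps PP P(2))
  ultimately show ?thesis by simp
qed

context
  assumes map_one: "\<phi> 1 = 0"
begin

lemma map_idempotent:
  assumes P: "P \<in> R" "P * P = P"
  shows "\<phi> P = \<phi> P * P + P * \<phi> P"
proof -
  have "\<phi> P * (1 - P) + (1 - P) * \<phi> P + P * \<phi> (1 - P) + \<phi> (1 - P) * P = 0"
    using P by (intro zero_product one_diff_mem) (simp_all add: algebra_simps)
  then have "(\<phi> P - (\<phi> P * P + P * \<phi> P)) + (\<phi> P - (\<phi> P * P + P * \<phi> P)) = 0"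
    by (simp add: map_diff[OF one_mem P(1)] map_one algebra_simps)
  then show ?thesis by (simp add: real_vector_double_zero)
qed

context
  fixes P assumes P_mem: "P \<in> R" and P_idem: "P * P = P"
begin

lemma idempotent_mult_left: "P * (P * x) = P * x"
  using P_idem by (simp add: mult.assoc[symmetric])

lemma idempotent_defect: "\<phi> P - \<phi> P * P - P * \<phi> P = 0"
  using map_idempotent[OF P_mem P_idem] by (simp only: diff_diff_eq_0_iff)

lemma map_mult_idempotent_corner_PP:
  assumes a: "a \<in> R" and Pa: "P * a = a" and aP: "a * P = a"
  shows "\<phi> (a * P) = \<phi> a * P + a * \<phi> P"
proof -
  have Pax: "P * (a * x) = a * x" and aPx: "a * (P * x) = a * x" for x
    using Pa aP by (simp_all add: mult.assoc[symmetric])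
  define e where "e = \<phi> a * (1 - P) + (1 - P) * \<phi> a + a * \<phi> (1 - P) + \<phi> (1 - P) * a"
  have e: "e = 0"
    unfolding e_def using a P_mem Pa aP by (intro zero_product one_diff_mem) (simp_all add: algebra_simps)
  let ?D = "\<phi> a - \<phi> a * P - a * \<phi> P"
  have "?D + ?D = P * e * (1 - P) + P * e * (1 - P) + (1 - P) * e * (1 - P)
      + a * (P * (\<phi> P - \<phi> P * P - P * \<phi> P) * P) + a * (P * (\<phi> P - \<phi> P * P - P * \<phi> P) * P)"
    unfolding e_def map_diff[OF one_mem P_mem] map_one
    by (simp add: algebra_simps idempotent_mult_left Pax aPx Pa aP P_idem)
  also have "\<dots> = 0" unfolding e idempotent_defect by simp
  finally show ?thesis
    using aP by (simp only: real_vector_double_zero diff_diff_eq_0_iff)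
qed

lemma map_mult_idempotent_corner_QQ:
  assumes d: "d \<in> R" and Pd: "P * d = 0" and dP: "d * P = 0"
  shows "\<phi> (d * P) = \<phi> d * P + d * \<phi> P"
proof -
  have Pdx: "P * (d * x) = 0" and dPx: "d * (P * x) = 0" for x
    using Pd dP by (simp_all add: mult.assoc[symmetric])
  define e where "e = \<phi> P * d + d * \<phi> P + P * \<phi> d + \<phi> d * P"
  have e: "e = 0" unfolding e_def using zero_product[OF P_mem d Pd dP] .
  let ?D = "\<phi> d * P + d * \<phi> P"
  have "?D + ?D = e * P + e * P - P * e * P
      + d * ((1 - P) * (\<phi> P - \<phi> P * P - P * \<phi> P) * (1 - P))
      + d * ((1 - P) * (\<phi> P - \<phi> P * P - P * \<phi> P) * (1 - P))"
    unfolding e_def by (simp add: algebra_simps idempotent_mult_left Pdx dPx Pd dP P_idem)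
  also have "\<dots> = 0" unfolding e idempotent_defect by simp
  finally have "?D = 0" by (simp only: real_vector_double_zero)
  then show ?thesis using dP by (simp add: map_zero)
qed

text \<open>For a square zero \<open>n\<close> in the off-diagonal corners, \<open>P + n\<close> and \<open>P - n\<close> are idempotents too.\<close>

lemma map_off_diagonal_square_zero:
  assumes n: "n \<in> R" and Pn: "P * n + n * P = n" and nn: "n * n = 0"
  shows "\<phi> n = \<phi> P * n + \<phi> n * P + P * \<phi> n + n * \<phi> P"
    and "\<phi> n * n + n * \<phi> n = 0"
proof -
  have "(P + n) * (P + n) = P + n" "(P - n) * (P - n) = P - n"
    using Pn nn P_idem by (simp_all add: algebra_simps)
  then have plus: "(\<phi> P + \<phi> n) - (\<phi> P + \<phi> n) * (P + n) - (P + n) * (\<phi> P + \<phi> n) = 0"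
    and minus: "(\<phi> P - \<phi> n) - (\<phi> P - \<phi> n) * (P - n) - (P - n) * (\<phi> P - \<phi> n) = 0"
    using map_idempotent[OF add_mem[OF P_mem n]] map_idempotent[OF diff_mem[OF P_mem n]]
    unfolding map_add[OF P_mem n] map_diff[OF P_mem n] diff_diff_eq_0_iff by simp_all
  let ?H = "\<phi> n * n + n * \<phi> n"
  have "?H + ?H = (\<phi> P - \<phi> P * P - P * \<phi> P) + (\<phi> P - \<phi> P * P - P * \<phi> P)
      - ((\<phi> P + \<phi> n) - (\<phi> P + \<phi> n) * (P + n) - (P + n) * (\<phi> P + \<phi> n))
      - ((\<phi> P - \<phi> n) - (\<phi> P - \<phi> n) * (P - n) - (P - n) * (\<phi> P - \<phi> n))"
    by (simp add: algebra_simps)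
  also have "\<dots> = 0" unfolding plus minus idempotent_defect by simp
  finally show H: "?H = 0" by (simp only: real_vector_double_zero)
  have "\<phi> n - (\<phi> P * n + \<phi> n * P) - (P * \<phi> n + n * \<phi> P) =
      ((\<phi> P + \<phi> n) - (\<phi> P + \<phi> n) * (P + n) - (P + n) * (\<phi> P + \<phi> n))
      - (\<phi> P - \<phi> P * P - P * \<phi> P) + ?H"
    by (simp add: algebra_simps)
  also have "\<dots> = 0" unfolding plus H idempotent_defect by simp
  finally show "\<phi> n = \<phi> P * n + \<phi> n * P + P * \<phi> n + n * \<phi> P"
    by (simp only: diff_diff_eq_0_iff add.assoc)
qed

end

lemma map_mult_idempotent_corner_PQ:
  assumes P: "minimal_idempotent R P"
    and n: "n \<in> R" and Pn: "P * n = n" and nP: "n * P = 0"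
  shows "\<phi> (n * P) = \<phi> n * P + n * \<phi> P"
proof -
  have P_mem: "P \<in> R" and P_idem: "P * P = P" using P by (simp_all add: minimal_idempotentD)
  note idempotent_mult_left = idempotent_mult_left[OF P_mem P_idem]
    and idempotent_defect = idempotent_defect[OF P_mem P_idem]
  have Pnx: "P * (n * x) = n * x" and nPx: "n * (P * x) = 0" for x
    using Pn nP by (simp_all add: mult.assoc[symmetric])
  have nn: "n * n = 0" using Pn nP by (metis mult.assoc mult_zero_left)
  have G: "\<phi> n = \<phi> P * n + \<phi> n * P + P * \<phi> n + n * \<phi> P"
    and H: "\<phi> n * n + n * \<phi> n = 0"
    using map_off_diagonal_square_zero[OF P_mem P_idem n _ nn] Pn nP by simp_all
  define T where "T = (1 - P) * \<phi> n * P"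
  have "T * n = (1 - P) * (\<phi> n * n + n * \<phi> n)"
    unfolding T_def by (simp add: algebra_simps Pnx nPx Pn nP nn)
  then have "T * n = 0" using H by simp
  moreover have "T * P = T" unfolding T_def by (simp add: mult.assoc P_idem)
  moreover have "T \<in> R" unfolding T_def using mult_mem one_diff_mem map_mem P_mem n by simp
  ultimately have T: "T = 0 \<or> n = 0" using minimal_idempotent_no_zero_divisors[OF P _ n] Pn by blast
  have "\<phi> n * P + n * \<phi> P =
      T - (\<phi> n - (\<phi> P * n + \<phi> n * P + P * \<phi> n + n * \<phi> P)) * P
      + n * ((1 - P) * (\<phi> P - \<phi> P * P - P * \<phi> P) * (1 - P))"
    unfolding T_def by (simp add: algebra_simps idempotent_mult_left Pnx nPx Pn nP P_idem)
  also have "\<dots> = T" using G[symmetric] unfolding idempotent_defect by simp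
  finally show ?thesis using T nP by (auto simp: map_zero)
qed

lemma map_mult_idempotent_corner_QP:
  assumes P: "minimal_idempotent R P"
    and b: "b \<in> R" and Pb: "P * b = 0" and bP: "b * P = b"
  shows "\<phi> (b * P) = \<phi> b * P + b * \<phi> P"
proof -
  have P_mem: "P \<in> R" and P_idem: "P * P = P" using P by (simp_all add: minimal_idempotentD)
  note idempotent_mult_left = idempotent_mult_left[OF P_mem P_idem]
    and idempotent_defect = idempotent_defect[OF P_mem P_idem]
  have Pbx: "P * (b * x) = 0" and bPx: "b * (P * x) = b * x" for x
    using Pb bP by (simp_all add: mult.assoc[symmetric])
  have bb: "b * b = 0" using Pb bP by (metis mult.assoc mult_zero_right)
  have G: "\<phi> b = \<phi> P * b + \<phi> b * P + P * \<phi> b + b * \<phi> P"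
    and H: "\<phi> b * b + b * \<phi> b = 0"
    using map_off_diagonal_square_zero[OF P_mem P_idem b _ bb] Pb bP by simp_all
  define T where "T = P * \<phi> b * (1 - P)"
  have "b * T = (\<phi> b * b + b * \<phi> b) * (1 - P)"
    unfolding T_def by (simp add: algebra_simps Pbx bPx Pb bP bb)
  then have "b * T = 0" using H by simp
  moreover have "P * T = T" unfolding T_def by (simp add: mult.assoc[symmetric] P_idem)
  moreover have "T \<in> R" unfolding T_def using mult_mem one_diff_mem map_mem P_mem b by simp
  ultimately have T: "T = 0 \<or> b = 0" using minimal_idempotent_no_zero_divisors[OF P b] bP by blast
  have "\<phi> b - \<phi> b * P - b * \<phi> P =
      (\<phi> b - (\<phi> P * b + \<phi> b * P + P * \<phi> b + b * \<phi> P)) * (1 - P) + T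
      + b * (P * (\<phi> P - \<phi> P * P - P * \<phi> P) * P)"
    unfolding T_def by (simp add: algebra_simps idempotent_mult_left Pbx bPx Pb bP P_idem)
  also have "\<dots> = T" using G[symmetric] unfolding idempotent_defect by simp
  finally have "\<phi> b = \<phi> b * P + b * \<phi> P \<or> b = 0"
    using T unfolding diff_diff_eq_0_iff[symmetric] by auto
  then show ?thesis using bP by (auto simp: map_zero)
qed

text \<open>Peirce decomposition of \<open>X\<close> with respect to \<open>P\<close> and \<open>1 - P\<close>.\<close>

lemma map_mult_minimal_idempotent:
  assumes P: "minimal_idempotent R P" and X: "X \<in> R"
  shows "\<phi> (X * P) = \<phi> X * P + X * \<phi> P"
proof -
  have P_mem: "P \<in> R" and P_idem: "P * P = P" using P by (simp_all add: minimal_idempotentD)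
  have idempotent_mult_left: "P * (P * x) = P * x" for x using idempotent_mult_left[OF P_mem P_idem] .
  define a b n d where "a = P * X * P" and "b = (1 - P) * X * P"
    and "n = P * X * (1 - P)" and "d = (1 - P) * X * (1 - P)"
  have mem: "a \<in> R" "b \<in> R" "n \<in> R" "d \<in> R"
    unfolding a_def b_def n_def d_def by (simp_all add: mult_mem one_diff_mem P_mem X)
  have X_eq: "X = a + b + n + d" unfolding a_def b_def n_def d_def by (simp add: algebra_simps)
  have "\<phi> (a * P) = \<phi> a * P + a * \<phi> P"
    by (rule map_mult_idempotent_corner_PP[OF P_mem P_idem mem(1)]) (simp_all add: a_def mult.assoc idempotent_mult_left P_idem)
  moreover have "\<phi> (b * P) = \<phi> b * P + b * \<phi> P"
    by (rule map_mult_idempotent_corner_QP[OF P mem(2)])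
      (simp_all add: b_def algebra_simps idempotent_mult_left P_idem)
  moreover have "\<phi> (n * P) = \<phi> n * P + n * \<phi> P"
    by (rule map_mult_idempotent_corner_PQ[OF P mem(3)])
      (simp_all add: n_def algebra_simps idempotent_mult_left P_idem)
  moreover have "\<phi> (d * P) = \<phi> d * P + d * \<phi> P"
    by (rule map_mult_idempotent_corner_QQ[OF P_mem P_idem mem(4)])
      (simp_all add: d_def algebra_simps idempotent_mult_left P_idem)
  moreover have "\<phi> (X * P) = \<phi> (a * P) + \<phi> (b * P) + \<phi> (n * P) + \<phi> (d * P)"
    using mem P_mem by (subst X_eq) (simp add: distrib_right map_add add_mem mult_mem)
  moreover have "\<phi> X = \<phi> a + \<phi> b + \<phi> n + \<phi> d"
    using mem by (subst X_eq) (simp add: map_add add_mem)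
  ultimately show ?thesis
    by (subst (2) X_eq) (simp add: algebra_simps)
qed

end

end

text \<open>\<open>E\<close> plays the role of the rank-one operators: a left ideal that separates \<open>R\<close> and whose
  elements are spanned, over \<open>\<real>[j]\<close>, by minimal idempotents.\<close>

locale zero_product_jordan_separated = zero_product_jordan_map R \<phi>
  for R :: "'r::{real_algebra,monoid_mult} set" and \<phi> +
  fixes j :: 'r and E :: "'r set"
  assumes j_mem: "j \<in> R" and j_central: "x \<in> R \<Longrightarrow> j * x = x * j"
    and map_j: "x \<in> R \<Longrightarrow> \<phi> (j * x) = j * \<phi> x"
    and E_subset: "E \<subseteq> R"
    and E_left_ideal: "T \<in> R \<Longrightarrow> e \<in> E \<Longrightarrow> T * e \<in> E"
    and E_separating: "W \<in> R \<Longrightarrow> (\<And>e. e \<in> E \<Longrightarrow> W * e = 0) \<Longrightarrow> W = 0"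
    and E_span: "e \<in> E \<Longrightarrow> \<exists>P1 P2 a b. minimal_idempotent R P1 \<and> minimal_idempotent R P2 \<and>
                    e = P1 + a *\<^sub>R P2 + b *\<^sub>R (j * P2)"
begin

lemma j_mult_left_commute: "x \<in> R \<Longrightarrow> x * (j * y) = j * (x * y)"
  using j_central by (simp add: mult.assoc[symmetric])

lemma map_one_commutes_E:
  assumes "e \<in> E" shows "e * \<phi> 1 = \<phi> 1 * e"
proof -
  obtain P1 P2 a b where P: "minimal_idempotent R P1" "minimal_idempotent R P2"
    and e: "e = P1 + a *\<^sub>R P2 + b *\<^sub>R (j * P2)"
    using E_span[OF assms] by blast
  have "P1 * \<phi> 1 = \<phi> 1 * P1" "P2 * \<phi> 1 = \<phi> 1 * P2"
    using P by (simp_all add: idempotent_commutes_map_one minimal_idempotentD)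
  moreover have "j * P2 * \<phi> 1 = \<phi> 1 * (j * P2)"
    using calculation(2) j_mult_left_commute[OF map_mem[OF one_mem]] by (simp add: mult.assoc)
  ultimately show ?thesis
    unfolding e by (simp add: distrib_left distrib_right)
qed

lemma map_one_central:
  assumes T: "T \<in> R" shows "\<phi> 1 * T = T * \<phi> 1"
proof -
  have annihilates: "(\<phi> 1 * T - T * \<phi> 1) * e = 0" if e: "e \<in> E" for e
  proof -
    have "(\<phi> 1 * T - T * \<phi> 1) * e = \<phi> 1 * (T * e) - T * (\<phi> 1 * e)"
      by (simp add: left_diff_distrib mult.assoc)
    also have "\<dots> = \<phi> 1 * (T * e) - T * e * \<phi> 1"
      by (simp only: map_one_commutes_E[OF e] mult.assoc)
    also have "\<dots> = 0"
      by (simp only: map_one_commutes_E[OF E_left_ideal[OF T e]] diff_self)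
    finally show ?thesis .
  qed
  have "\<phi> 1 * T - T * \<phi> 1 = 0"
    by (rule E_separating[OF _ annihilates]) (simp add: diff_mem mult_mem map_mem one_mem T)
  then show ?thesis by simp
qed

context
  assumes map_one: "\<phi> 1 = 0"
begin

lemma map_mult_E:
  assumes X: "X \<in> R" and e: "e \<in> E"
  shows "\<phi> (X * e) = \<phi> X * e + X * \<phi> e"
proof -
  obtain P1 P2 a b where P: "minimal_idempotent R P1" "minimal_idempotent R P2"
    and e_eq: "e = P1 + a *\<^sub>R P2 + b *\<^sub>R (j * P2)"
    using E_span[OF e] by blast
  have mem: "P1 \<in> R" "P2 \<in> R" using P by (simp_all add: minimal_idempotent_mem)
  have "X * e = X * P1 + a *\<^sub>R (X * P2) + b *\<^sub>R (j * (X * P2))"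
    unfolding e_eq using j_mult_left_commute[OF X] by (simp add: algebra_simps)
  then have "\<phi> (X * e) = \<phi> (X * P1) + a *\<^sub>R \<phi> (X * P2) + b *\<^sub>R (j * \<phi> (X * P2))"
    using X mem j_mem by (simp add: map_add map_scaleR map_j add_mem mult_mem scaleR_mem)
  moreover have "\<phi> e = \<phi> P1 + a *\<^sub>R \<phi> P2 + b *\<^sub>R (j * \<phi> P2)"
    unfolding e_eq using mem j_mem by (simp add: map_add map_scaleR map_j add_mem mult_mem scaleR_mem)
  ultimately show ?thesis
    unfolding e_eq
    using map_mult_minimal_idempotent[OF map_one P(1) X] map_mult_minimal_idempotent[OF map_one P(2) X]
      j_mult_left_commute[OF X] j_mult_left_commute[OF map_mem[OF X]]
    by (simp add: algebra_simps)
qed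

theorem map_mult:
  assumes S: "S \<in> R" and T: "T \<in> R"
  shows "\<phi> (S * T) = \<phi> S * T + S * \<phi> T"
proof -
  have annihilates: "(\<phi> (S * T) - \<phi> S * T - S * \<phi> T) * e = 0" if e: "e \<in> E" for e
  proof -
    have "\<phi> (S * T) * e + (S * T) * \<phi> e = \<phi> S * (T * e) + S * (\<phi> T * e + T * \<phi> e)"
      using map_mult_E[OF mult_mem[OF S T] e] map_mult_E[OF S E_left_ideal[OF T e]]
        map_mult_E[OF T e] by (simp add: mult.assoc)
    then show ?thesis by (simp add: algebra_simps)
  qed
  have "\<phi> (S * T) - \<phi> S * T - S * \<phi> T = 0"
    by (rule E_separating[OF _ annihilates]) (simp add: diff_mem mult_mem map_mem S T)
  then show ?thesis by (simp only: diff_diff_eq_0_iff)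
qed

end

lemma zero_product_jordan_separated_centered: "zero_product_jordan_separated R (\<lambda>x. \<phi> x - \<phi> 1 * x) j E"
proof unfold_locales
  fix A B assume A: "A \<in> R" and B: "B \<in> R" and AB: "A * B = 0" and BA: "B * A = 0"
  have "A * (B * x) = 0" "B * (A * x) = 0" for x
    using AB BA by (simp_all add: mult.assoc[symmetric])
  then have "\<phi> 1 * A * B + B * (\<phi> 1 * A) + A * (\<phi> 1 * B) + \<phi> 1 * B * A = 0"
    using map_one_central[OF A] map_one_central[OF B] AB BA by (simp add: mult.assoc)
  then show "(\<phi> A - \<phi> 1 * A) * B + B * (\<phi> A - \<phi> 1 * A) + A * (\<phi> B - \<phi> 1 * B)
      + (\<phi> B - \<phi> 1 * B) * A = 0"
    using zero_product[OF A B AB BA] AB BA by (simp add: algebra_simps)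
next
  fix x assume x: "x \<in> R"
  show "\<phi> (j * x) - \<phi> 1 * (j * x) = j * (\<phi> x - \<phi> 1 * x)"
    using map_j[OF x] j_mult_left_commute[OF map_mem[OF one_mem]] by (simp add: right_diff_distrib)
next
  fix x a assume "x \<in> R"
  then show "\<phi> (a *\<^sub>R x) - \<phi> 1 * a *\<^sub>R x = a *\<^sub>R (\<phi> x - \<phi> 1 * x)"
    by (simp add: map_scaleR scaleR_diff_right)
next
  fix x y assume "x \<in> R" "y \<in> R"
  then show "\<phi> (x + y) - \<phi> 1 * (x + y) = \<phi> x - \<phi> 1 * x + (\<phi> y - \<phi> 1 * y)"
    by (simp add: map_add distrib_left)
next
  fix x assume "x \<in> R"
  then show "\<phi> x - \<phi> 1 * x \<in> R" by (simp add: diff_mem mult_mem map_mem one_mem)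
qed (fact one_mem add_mem mult_mem scaleR_mem j_mem j_central E_subset E_left_ideal E_separating E_span)+

theorem map_mult_centered:
  assumes "S \<in> R" "T \<in> R"
  shows "\<phi> (S * T) - \<phi> 1 * (S * T) = (\<phi> S - \<phi> 1 * S) * T + S * (\<phi> T - \<phi> 1 * T)"
proof -
  interpret centered: zero_product_jordan_separated R "\<lambda>x. \<phi> x - \<phi> 1 * x" j E
    by (rule zero_product_jordan_separated_centered)
  show ?thesis using centered.map_mult[OF _ assms] by simp
qed

end

section \<open>Norming functionals\<close>

text \<open>Norm-dominated linear functionals on subspaces, represented by their graphs so that the union
  of a chain is again one (for Zorn's lemma).\<close>

definition dominated_linear_graph :: "('a::real_normed_vector \<times> real) set \<Rightarrow> bool" where
  "dominated_linear_graph G \<longleftrightarrow> (0, 0) \<in> G \<and>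
     (\<forall>x a y b. (x, a) \<in> G \<longrightarrow> (y, b) \<in> G \<longrightarrow> (x + y, a + b) \<in> G) \<and>
     (\<forall>c x a. (x, a) \<in> G \<longrightarrow> (c *\<^sub>R x, c * a) \<in> G) \<and>
     (\<forall>x a b. (x, a) \<in> G \<longrightarrow> (x, b) \<in> G \<longrightarrow> a = b) \<and>
     (\<forall>x a. (x, a) \<in> G \<longrightarrow> a \<le> norm x)"

lemma dominated_linear_graphD:
  assumes "dominated_linear_graph G"
  shows dominated_linear_graph_zero: "(0, 0) \<in> G"
    and dominated_linear_graph_add: "\<And>x a y b. (x, a) \<in> G \<Longrightarrow> (y, b) \<in> G \<Longrightarrow> (x + y, a + b) \<in> G"
    and dominated_linear_graph_scale: "\<And>c x a. (x, a) \<in> G \<Longrightarrow> (c *\<^sub>R x, c * a) \<in> G"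
    and dominated_linear_graph_unique: "\<And>x a b. (x, a) \<in> G \<Longrightarrow> (x, b) \<in> G \<Longrightarrow> a = b"
    and dominated_linear_graph_le_norm: "\<And>x a. (x, a) \<in> G \<Longrightarrow> a \<le> norm x"
  using assms unfolding dominated_linear_graph_def by blast+

lemma dominated_linear_graph_extension_value:
  assumes G: "dominated_linear_graph G"
  obtains c where "\<And>x a. (x, a) \<in> G \<Longrightarrow> a - norm (x - y) \<le> c"
    and "\<And>z b. (z, b) \<in> G \<Longrightarrow> c \<le> norm (z + y) - b"
proof
  let ?S = "{a - norm (x - y) | x a. (x, a) \<in> G}"
  have sep: "a - norm (x - y) \<le> norm (z + y) - b" if "(x, a) \<in> G" "(z, b) \<in> G" for x a z b
  proof -
    have "a + b \<le> norm ((x - y) + (z + y))"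
      using dominated_linear_graph_le_norm[OF G dominated_linear_graph_add[OF G that]] by simp
    also have "\<dots> \<le> norm (x - y) + norm (z + y)" by (rule norm_triangle_ineq)
    finally show ?thesis by simp
  qed
  have "bdd_above ?S"
    using sep[OF _ dominated_linear_graph_zero[OF G]] by (auto simp: bdd_above_def)
  then show "a - norm (x - y) \<le> Sup ?S" if "(x, a) \<in> G" for x a
    using that by (auto intro: cSup_upper)
  show "Sup ?S \<le> norm (z + y) - b" if "(z, b) \<in> G" for z b
    using sep[OF _ that] dominated_linear_graph_zero[OF G] by (auto intro!: cSup_least)
qed

lemma dominated_linear_graph_extension_bound:
  assumes G: "dominated_linear_graph G" and xa: "(x, a) \<in> G"
    and below: "\<And>x a. (x, a) \<in> G \<Longrightarrow> a - norm (x - y) \<le> c"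
    and above: "\<And>z b. (z, b) \<in> G \<Longrightarrow> c \<le> norm (z + y) - b"
  shows "a + t * c \<le> norm (x + t *\<^sub>R y)"
proof (cases t "0::real" rule: linorder_cases)
  case less
  have "a / -t - norm (x /\<^sub>R -t - y) \<le> c"
    using below[OF dominated_linear_graph_scale[OF G xa, of "1 / -t"]] by (simp add: divide_inverse mult.commute)
  also have "x /\<^sub>R -t - y = (1 / -t) *\<^sub>R (x + t *\<^sub>R y)"
    using less by (simp add: algebra_simps divide_inverse)
  finally have "(a - norm (x + t *\<^sub>R y)) / -t \<le> c"
    using less by (simp add: diff_divide_distrib)
  then have "a - norm (x + t *\<^sub>R y) \<le> c * -t"
    using less by (simp only: pos_divide_le_eq neg_0_less_iff_less)
  then show ?thesis by (simp add: algebra_simps)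
next
  case greater
  have "c \<le> norm (x /\<^sub>R t + y) - a / t"
    using above[OF dominated_linear_graph_scale[OF G xa, of "1 / t"]] by (simp add: divide_inverse mult.commute)
  also have "x /\<^sub>R t + y = (1 / t) *\<^sub>R (x + t *\<^sub>R y)"
    using greater by (simp add: algebra_simps divide_inverse)
  finally have "c \<le> (norm (x + t *\<^sub>R y) - a) / t"
    using greater by (simp add: diff_divide_distrib)
  then have "c * t \<le> norm (x + t *\<^sub>R y) - a"
    using greater by (simp only: pos_le_divide_eq)
  then show ?thesis by (simp add: algebra_simps)
qed (simp add: dominated_linear_graph_le_norm[OF G xa])

lemma dominated_linear_graph_extension_unique:
  assumes G: "dominated_linear_graph G" and y: "\<forall>a. (y, a) \<notin> G"
    and xa1: "(x1, a1) \<in> G" and xa2: "(x2, a2) \<in> G" and eq: "x1 + t1 *\<^sub>R y = x2 + t2 *\<^sub>R y"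
  shows "a1 = a2 \<and> t1 = t2"
proof -
  have diff: "(x1 - x2, a1 - a2) \<in> G"
    using dominated_linear_graph_add[OF G xa1 dominated_linear_graph_scale[OF G xa2, of "-1"]] by simp
  have "t1 = t2"
  proof (rule ccontr)
    assume "t1 \<noteq> t2"
    moreover have "x1 - x2 = (t2 - t1) *\<^sub>R y"
      using eq by (simp add: algebra_simps)
    ultimately have "y = (1 / (t2 - t1)) *\<^sub>R (x1 - x2)" by simp
    then have "(y, (1 / (t2 - t1)) * (a1 - a2)) \<in> G"
      using dominated_linear_graph_scale[OF G diff, of "1 / (t2 - t1)"] by simp
    then show False using y by blast
  qed
  then show ?thesis
    using eq dominated_linear_graph_unique[OF G xa1] xa2 by simp
qed

lemma dominated_linear_graph_extend:
  assumes G: "dominated_linear_graph G" and y: "\<forall>a. (y, a) \<notin> G"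
  shows "\<exists>G'. dominated_linear_graph G' \<and> G \<subset> G'"
proof -
  obtain c where below: "\<And>x a. (x, a) \<in> G \<Longrightarrow> a - norm (x - y) \<le> c"
    and above: "\<And>z b. (z, b) \<in> G \<Longrightarrow> c \<le> norm (z + y) - b"
    using dominated_linear_graph_extension_value[OF G] by blast
  define G' where "G' = {(x + t *\<^sub>R y, a + t * c) | x a t. (x, a) \<in> G}"
  have G'I: "(x + t *\<^sub>R y, a + t * c) \<in> G'" if "(x, a) \<in> G" for x a t
    using that unfolding G'_def by blast
  note G_add = dominated_linear_graph_add[OF G] and G_scale = dominated_linear_graph_scale[OF G]
  have "dominated_linear_graph G'"
    unfolding dominated_linear_graph_def
  proof (intro conjI allI impI)
    show "(0, 0) \<in> G'" using G'I[OF dominated_linear_graph_zero[OF G], of 0] by simp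
  next
    fix x a z b assume "(x, a) \<in> G'" "(z, b) \<in> G'"
    then obtain x1 a1 t1 x2 a2 t2 where "x = x1 + t1 *\<^sub>R y" "a = a1 + t1 * c" "(x1, a1) \<in> G"
      and "z = x2 + t2 *\<^sub>R y" "b = a2 + t2 * c" "(x2, a2) \<in> G" unfolding G'_def by blast
    then show "(x + z, a + b) \<in> G'"
      using G'I[OF G_add, of x1 a1 x2 a2 "t1 + t2"] by (simp add: algebra_simps)
  next
    fix k x a assume "(x, a) \<in> G'"
    then obtain x1 a1 t where "x = x1 + t *\<^sub>R y" "a = a1 + t * c" "(x1, a1) \<in> G"
      unfolding G'_def by blast
    then show "(k *\<^sub>R x, k * a) \<in> G'"
      using G'I[OF G_scale, of x1 a1 k "k * t"] by (simp add: algebra_simps)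
  next
    fix x a b assume "(x, a) \<in> G'" "(x, b) \<in> G'"
    then obtain x1 a1 t1 x2 a2 t2 where "x = x1 + t1 *\<^sub>R y" "a = a1 + t1 * c" "(x1, a1) \<in> G"
      and "x = x2 + t2 *\<^sub>R y" "b = a2 + t2 * c" "(x2, a2) \<in> G" unfolding G'_def by blast
    then show "a = b" using dominated_linear_graph_extension_unique[OF G y, of x1 a1 x2 a2 t1 t2] by simp
  next
    fix x a assume "(x, a) \<in> G'"
    then obtain x1 a1 t where "x = x1 + t *\<^sub>R y" "a = a1 + t * c" "(x1, a1) \<in> G"
      unfolding G'_def by blast
    then show "a \<le> norm x"
      using dominated_linear_graph_extension_bound[OF G _ below above] by blast
  qed
  moreover have "G \<subseteq> G'"
    using G'I[of _ _ 0] by auto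
  moreover have "(y, c) \<in> G'"
    using G'I[OF dominated_linear_graph_zero[OF G], of 1] by simp
  ultimately show ?thesis using y by blast
qed

lemma dominated_linear_graph_Union_chain:
  assumes "Gs \<noteq> {}" and "chain\<^sub>\<subseteq> Gs" and "\<And>G. G \<in> Gs \<Longrightarrow> dominated_linear_graph G"
  shows "dominated_linear_graph (\<Union>Gs)"
proof -
  have common: "\<exists>G\<in>Gs. p \<in> G \<and> q \<in> G" if "p \<in> \<Union>Gs" "q \<in> \<Union>Gs" for p q
    using that \<open>chain\<^sub>\<subseteq> Gs\<close> unfolding chain_subset_def by blast
  show ?thesis
    unfolding dominated_linear_graph_def
  proof (intro conjI allI impI)
    show "(0, 0) \<in> \<Union>Gs"
      using assms(1) dominated_linear_graph_zero[OF assms(3)] by blast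
  next
    fix x a y b assume "(x, a) \<in> \<Union>Gs" "(y, b) \<in> \<Union>Gs"
    then show "(x + y, a + b) \<in> \<Union>Gs"
      using common dominated_linear_graph_add[OF assms(3)] by blast
  next
    fix k x a assume "(x, a) \<in> \<Union>Gs"
    then show "(k *\<^sub>R x, k * a) \<in> \<Union>Gs"
      using dominated_linear_graph_scale[OF assms(3)] by blast
  next
    fix x a b assume "(x, a) \<in> \<Union>Gs" "(x, b) \<in> \<Union>Gs"
    then show "a = b"
      using common dominated_linear_graph_unique[OF assms(3)] by blast
  next
    fix x a assume "(x, a) \<in> \<Union>Gs"
    then show "a \<le> norm x"
      using dominated_linear_graph_le_norm[OF assms(3)] by blast
  qed
qed

lemma dominated_linear_graph_total_functional:
  assumes G: "dominated_linear_graph G" and total: "\<And>x. \<exists>a. (x, a) \<in> G"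
  obtains f where "bounded_linear f" "\<And>x. \<bar>f x\<bar> \<le> norm x" "\<And>x. (x, f x) \<in> G"
proof
  define f where "f x = (THE a. (x, a) \<in> G)" for x
  show graph: "(x, f x) \<in> G" for x
  proof -
    obtain a where a: "(x, a) \<in> G" using total by blast
    have "f x = a"
      unfolding f_def
      by (rule the_equality[where P = "\<lambda>a. (x, a) \<in> G", OF a dominated_linear_graph_unique[OF G _ a]])
    then show ?thesis using a by simp
  qed
  have f_eqI: "f x = a" if "(x, a) \<in> G" for x a
    using dominated_linear_graph_unique[OF G graph that] .
  have add: "f (x + y) = f x + f y" and scale: "f (k *\<^sub>R x) = k * f x" for x y k
    by (intro f_eqI dominated_linear_graph_add[OF G graph graph]
        dominated_linear_graph_scale[OF G graph])+
  show abs_le: "\<bar>f x\<bar> \<le> norm x" for x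
    using dominated_linear_graph_le_norm[OF G graph, of x]
      dominated_linear_graph_le_norm[OF G graph, of "-x"] scale[of "-1" x] by simp
  show "bounded_linear f"
    by (rule bounded_linear_intro[where K = 1]) (simp_all add: add scale abs_le)
qed

lemma dominated_linear_graph_line:
  "dominated_linear_graph {(t *\<^sub>R x0, t * norm x0) | t. True}"
  unfolding dominated_linear_graph_def
proof (intro conjI allI impI)
  show "(0, 0) \<in> {(t *\<^sub>R x0, t * norm x0) | t. True}"
    by (rule CollectI, rule exI[of _ 0]) simp
next
  fix x a y b
  assume "(x, a) \<in> {(t *\<^sub>R x0, t * norm x0) | t. True}" "(y, b) \<in> {(t *\<^sub>R x0, t * norm x0) | t. True}"
  then obtain t s where "x = t *\<^sub>R x0" "a = t * norm x0" "y = s *\<^sub>R x0" "b = s * norm x0" by blast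
  then show "(x + y, a + b) \<in> {(t *\<^sub>R x0, t * norm x0) | t. True}"
    by (intro CollectI exI[of _ "t + s"]) (simp add: algebra_simps scaleR_add_left)
next
  fix k x a assume "(x, a) \<in> {(t *\<^sub>R x0, t * norm x0) | t. True}"
  then obtain t where "x = t *\<^sub>R x0" "a = t * norm x0" by blast
  then show "(k *\<^sub>R x, k * a) \<in> {(t *\<^sub>R x0, t * norm x0) | t. True}"
    by (intro CollectI exI[of _ "k * t"]) simp
next
  fix x a b
  assume "(x, a) \<in> {(t *\<^sub>R x0, t * norm x0) | t. True}" "(x, b) \<in> {(t *\<^sub>R x0, t * norm x0) | t. True}"
  then obtain t s where "x = t *\<^sub>R x0" "a = t * norm x0" "x = s *\<^sub>R x0" "b = s * norm x0"
    by blast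
  then show "a = b" by (cases "x0 = 0") simp_all
next
  fix x a assume "(x, a) \<in> {(t *\<^sub>R x0, t * norm x0) | t. True}"
  then obtain t where "x = t *\<^sub>R x0" "a = t * norm x0" by blast
  then show "a \<le> norm x" by (simp add: mult_right_mono)
qed

theorem hahn_banach_norming_functional:
  fixes x0 :: "'a::real_normed_vector"
  obtains f where "bounded_linear f" "\<And>x. \<bar>f x\<bar> \<le> norm x" "f x0 = norm x0"
proof -
  define G0 where "G0 = {(t *\<^sub>R x0, t * norm x0) | t. True}"
  have "dominated_linear_graph G0"
    unfolding G0_def by (rule dominated_linear_graph_line)
  then have nonempty: "{G. dominated_linear_graph G \<and> G0 \<subseteq> G} \<noteq> {}" by blast
  have "\<Union>Gs \<in> {G. dominated_linear_graph G \<and> G0 \<subseteq> G}"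
    if "Gs \<noteq> {}" "subset.chain {G. dominated_linear_graph G \<and> G0 \<subseteq> G} Gs" for Gs
    using that dominated_linear_graph_Union_chain[of Gs]
    unfolding subset.chain_def chain_subset_def by blast
  from subset_Zorn_nonempty[OF nonempty this]
  obtain M where M: "dominated_linear_graph M" "G0 \<subseteq> M"
    and maximal: "\<And>G. dominated_linear_graph G \<Longrightarrow> M \<subseteq> G \<Longrightarrow> G = M"
    by auto
  have "\<exists>a. (x, a) \<in> M" for x
  proof (rule ccontr)
    assume "\<nexists>a. (x, a) \<in> M"
    then obtain G where "dominated_linear_graph G" "M \<subset> G"
      using dominated_linear_graph_extend[OF M(1), of x] by blast
    then show False using maximal by blast
  qed
  then obtain f where f: "bounded_linear f" "\<And>x. \<bar>f x\<bar> \<le> norm x" "\<And>x. (x, f x) \<in> M"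
    using dominated_linear_graph_total_functional[OF M(1)] by blast
  have "(1 *\<^sub>R x0, 1 * norm x0) \<in> M"
    using M(2) unfolding G0_def by blast
  then have "(x0, norm x0) \<in> M" by simp
  then have "f x0 = norm x0"
    using dominated_linear_graph_unique[OF M(1) f(3)] by blast
  then show ?thesis using f that by blast
qed

section \<open>Rank-one operators\<close>

text \<open>\<open>J\<close> is multiplication by \<open>i\<close> in the complex case and \<open>0\<close> in the real case. The rank-one
  operator \<open>rank_one x\<close> is \<open>y \<mapsto> F y \<cdot> x\<close> for the \<open>\<bbbK>\<close>-linear functional \<open>F = f - i (f \<circ> J)\<close>.\<close>

locale rank_one_functional =
  fixes J :: "'a::real_vector \<Rightarrow> 'a" and f :: "'a \<Rightarrow> real" and w :: 'a
  assumes linear_J: "linear J" and J_cases: "J = (\<lambda>x. 0) \<or> (\<forall>x. J (J x) = - x)"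
    and linear_f: "linear f" and f_w: "f w = 1" and f_J_w: "f (J w) = 0"
begin

definition rank_one :: "'a \<Rightarrow> 'a \<Rightarrow> 'a" where
  "rank_one x y = f y *\<^sub>R x - f (J y) *\<^sub>R J x"

lemmas linear_simps = linear_add[OF linear_f] linear_scale[OF linear_f] linear_diff[OF linear_f]
  linear_neg[OF linear_f] linear_0[OF linear_f] linear_add[OF linear_J] linear_scale[OF linear_J]
  linear_diff[OF linear_J] linear_neg[OF linear_J] linear_0[OF linear_J]

lemma rank_one_w: "rank_one x w = x"
  by (simp add: rank_one_def f_w f_J_w)

lemma linear_rank_one: "linear (rank_one x)"
  unfolding linear_iff rank_one_def by (simp add: linear_simps algebra_simps scaleR_add_left)

lemma rank_one_add: "rank_one (x1 + x2) y = rank_one x1 y + rank_one x2 y"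
  by (simp add: rank_one_def linear_simps algebra_simps)

lemma rank_one_scaleR: "rank_one (c *\<^sub>R x) y = c *\<^sub>R rank_one x y"
  by (simp add: rank_one_def linear_simps algebra_simps)

lemma rank_one_J: "rank_one x (J y) = J (rank_one x y)"
  using J_cases by (auto simp: rank_one_def linear_simps)

lemma comp_rank_one:
  assumes T: "linear T" "\<And>z. T (J z) = J (T z)"
  shows "T \<circ> rank_one x = rank_one (T x)"
  by (rule ext) (simp add: rank_one_def T linear_diff[OF T(1)] linear_scale[OF T(1)])

lemma rank_one_idempotent:
  assumes u: "f u = 1" "f (J u) = 0"
  shows "rank_one u \<circ> rank_one u = rank_one u"
  unfolding rank_one_def using J_cases by (auto intro!: ext simp: linear_simps u)

lemma rank_one_zero [simp]: "rank_one 0 y = 0"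
  by (simp add: rank_one_def linear_simps)

lemma rank_one_eq_0_transfer:
  assumes "rank_one p y = 0" and "p \<noteq> 0"
  shows "rank_one q y = 0"
proof (cases "\<forall>x. J (J x) = - x")
  case True
  let ?a = "f y" and ?b = "f (J y)"
  have p: "?a *\<^sub>R p - ?b *\<^sub>R J p = 0" using assms(1) by (simp only: rank_one_def)
  have "?a *\<^sub>R J p + ?b *\<^sub>R p = J (?a *\<^sub>R p - ?b *\<^sub>R J p)"
    using True by (simp add: linear_simps)
  also have "\<dots> = 0" by (simp only: p linear_simps)
  finally have Jp: "?a *\<^sub>R J p + ?b *\<^sub>R p = 0" .
  have "(?a * ?a + ?b * ?b) *\<^sub>R p = ?a *\<^sub>R (?a *\<^sub>R p - ?b *\<^sub>R J p) + ?b *\<^sub>R (?a *\<^sub>R J p + ?b *\<^sub>R p)"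
    by (simp add: algebra_simps scaleR_add_left)
  also have "\<dots> = 0" by (simp only: p Jp scaleR_zero_right add_0)
  finally have "(?a * ?a + ?b * ?b) *\<^sub>R p = 0" .
  then have "?a = 0" "?b = 0" using \<open>p \<noteq> 0\<close> by (simp_all add: sum_squares_eq_zero_iff)
  then show ?thesis by (simp add: rank_one_def)
next
  case False
  then have "J z = 0" for z using J_cases by auto
  then show ?thesis using assms by (simp add: rank_one_def)
qed

lemma rank_one_idempotent_no_zero_divisors:
  assumes u: "f u = 1" "f (J u) = 0"
    and S: "linear S" "\<And>z. S (J z) = J (S z)"
    and SP: "S \<circ> rank_one u = S" and PT: "rank_one u \<circ> T = T" and ST: "S \<circ> T = (\<lambda>_. 0)"
  shows "S = (\<lambda>_. 0) \<or> T = (\<lambda>_. 0)"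
proof (cases "S u = 0")
  case True
  have "S z = 0" for z
    using fun_cong[OF SP, of z] comp_rank_one[OF S, of u] True by (metis comp_apply rank_one_zero)
  then show ?thesis by auto
next
  case False
  have "T y = 0" for y
  proof -
    have "rank_one (S u) (T y) = 0"
      using fun_cong[OF ST, of y] fun_cong[OF comp_rank_one[OF S, of u], of "T y"] fun_cong[OF PT, of y]
      by simp
    then show ?thesis
      using rank_one_eq_0_transfer[OF _ False, of "T y" u] fun_cong[OF PT, of y] by simp
  qed
  then show ?thesis by auto
qed

lemma rank_one_decomposition:
  obtains u a b where "f u = 1" "f (J u) = 0"
    and "rank_one x = (\<lambda>y. rank_one u y + a *\<^sub>R rank_one w y + b *\<^sub>R J (rank_one w y))"
proof -
  define \<alpha> \<beta> where "\<alpha> = f x" and "\<beta> = - f (J x)"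
  \<comment> \<open>\<open>u = x - F x \<cdot> w + w\<close>, so that \<open>F u = 1\<close>\<close>
  define u where "u = x - \<alpha> *\<^sub>R w - \<beta> *\<^sub>R J w + w"
  have "f u = 1" unfolding u_def \<alpha>_def by (simp add: linear_simps f_w f_J_w)
  moreover have "f (J u) = 0"
    unfolding u_def \<alpha>_def \<beta>_def using J_cases by (auto simp: linear_simps f_w f_J_w)
  moreover have "x = u + (\<alpha> - 1) *\<^sub>R w + \<beta> *\<^sub>R J w"
    unfolding u_def by (simp add: algebra_simps)
  then have "rank_one x = (\<lambda>y. rank_one u y + (\<alpha> - 1) *\<^sub>R rank_one w y + \<beta> *\<^sub>R J (rank_one w y))"
    by (intro ext) (simp add: rank_one_add rank_one_scaleR fun_cong[OF comp_rank_one[OF linear_J], symmetric])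
  ultimately show ?thesis using that by blast
qed

end

lemma exists_normalized_functional:
  fixes J :: "'a::real_normed_vector \<Rightarrow> 'a" and z :: 'a
  assumes J: "linear J" "J = (\<lambda>x. 0) \<or> (\<forall>x. J (J x) = - x)" and z: "z \<noteq> 0"
  obtains f :: "'a \<Rightarrow> real" and w where "bounded_linear f" "f w = 1" "f (J w) = 0"
proof -
  obtain f :: "'a \<Rightarrow> real" where f: "bounded_linear f" and fz: "f z = norm z"
    using hahn_banach_norming_functional by blast
  note f_simps = linear_add[OF bounded_linear.linear[OF f]] linear_scale[OF bounded_linear.linear[OF f]]
    linear_neg[OF bounded_linear.linear[OF f]] linear_0[OF bounded_linear.linear[OF f]]
    linear_diff[OF bounded_linear.linear[OF f]]
  define p q where "p = norm z" and "q = f (J z)"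
  have fp: "f z = p" and fq: "f (J z) = q" unfolding p_def q_def by (simp_all add: fz)
  define d where "d = p * p + q * q"
  have d: "d > 0" using z unfolding d_def p_def by (simp add: add_pos_nonneg)
  \<comment> \<open>\<open>w = z / F z\<close> with \<open>F z = p - i q\<close>\<close>
  define w where "w = (p / d) *\<^sub>R z + (q / d) *\<^sub>R J z"
  have "f w = p / d * p + q / d * q"
    unfolding w_def by (simp add: f_simps fp fq)
  also have "\<dots> = (p * p + q * q) / d" by (simp only: times_divide_eq_left add_divide_distrib)
  also have "\<dots> = 1" using d unfolding d_def by (metis less_irrefl divide_self)
  finally have "f w = 1" .
  moreover have "f (J w) = 0"
    using J(2)
  proof
    assume "\<forall>x. J (J x) = - x"
    then show ?thesis
      unfolding w_def by (simp add: f_simps linear_add[OF J(1)] linear_scale[OF J(1)] fp fq algebra_simps)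
  qed (simp add: f_simps)
  ultimately show ?thesis using f that by blast
qed

section \<open>Standard operator algebras\<close>

text \<open>Linear operators as a real algebra under composition, so that operator identities can be
  handled by ring automation (on \<open>'a \<Rightarrow> 'a\<close>, \<open>*\<close> would be the pointwise product).\<close>

typedef (overloaded) 'a lop = "{f :: 'a::real_vector \<Rightarrow> 'a. linear f}"
  morphisms app Lop
  by (rule exI[of _ id]) (simp add: linear_id)

setup_lifting type_definition_lop

instantiation lop :: (real_vector) "{real_algebra, monoid_mult}"
begin

lift_definition zero_lop :: "'a lop" is "\<lambda>x. 0" by (rule linear_zero)
lift_definition one_lop :: "'a lop" is "id" by (rule linear_id)
lift_definition plus_lop :: "'a lop \<Rightarrow> 'a lop \<Rightarrow> 'a lop" is "\<lambda>f g x. f x + g x"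
  by (rule linear_compose_add)
lift_definition minus_lop :: "'a lop \<Rightarrow> 'a lop \<Rightarrow> 'a lop" is "\<lambda>f g x. f x - g x"
  by (rule linear_compose_sub)
lift_definition uminus_lop :: "'a lop \<Rightarrow> 'a lop" is "\<lambda>f x. - f x"
  by (rule linear_compose_neg)
lift_definition times_lop :: "'a lop \<Rightarrow> 'a lop \<Rightarrow> 'a lop" is "\<lambda>f g. f \<circ> g"
  by (rule linear_compose)
lift_definition scaleR_lop :: "real \<Rightarrow> 'a lop \<Rightarrow> 'a lop" is "\<lambda>c f x. c *\<^sub>R f x"
  by (rule linear_compose_scale_right)

instance
  by standard (transfer; auto simp: algebra_simps linear_add linear_diff linear_scale)+

end

lemmas app_lop_simps [simp] = zero_lop.rep_eq one_lop.rep_eq plus_lop.rep_eq minus_lop.rep_eq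
  uminus_lop.rep_eq times_lop.rep_eq scaleR_lop.rep_eq

lemma app_Lop: "linear f \<Longrightarrow> app (Lop f) = f"
  by (simp add: Lop_inverse)

lemma lop_eq_iff: "s = t \<longleftrightarrow> app s = app t"
  by (simp add: app_inject)

lemma scalar_data_obtain:
  assumes "scalar_data C"
  obtains J where "(C = {} \<and> J = (\<lambda>x. 0)) \<or> (complex_structure J \<and> C = {J})"
  using assms unfolding scalar_data_def by blast

locale standard_operator_algebra =
  fixes C :: "('a::banach \<Rightarrow> 'a) set" and \<A> :: "('a \<Rightarrow> 'a) set" and J :: "'a \<Rightarrow> 'a"
  assumes standard: "unital_standard_algebra C \<A>"
    and scalars: "(C = {} \<and> J = (\<lambda>x. 0)) \<or> (complex_structure J \<and> C = {J})"
begin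

lemma subset_bops: "\<A> \<subseteq> bops C"
  and fin_rank_subset: "fin_rank C \<subseteq> \<A>"
  and id_mem: "id \<in> \<A>"
  and add_mem: "S \<in> \<A> \<Longrightarrow> T \<in> \<A> \<Longrightarrow> (\<lambda>x. S x + T x) \<in> \<A>"
  and comp_mem: "S \<in> \<A> \<Longrightarrow> T \<in> \<A> \<Longrightarrow> S \<circ> T \<in> \<A>"
  and scaleR_mem: "T \<in> \<A> \<Longrightarrow> (\<lambda>x. c *\<^sub>R T x) \<in> \<A>"
  and C_comp_mem: "K \<in> C \<Longrightarrow> T \<in> \<A> \<Longrightarrow> K \<circ> T \<in> \<A>"
  using standard unfolding unital_standard_algebra_def by blast+

lemma bounded_linear_mem: "T \<in> \<A> \<Longrightarrow> bounded_linear T"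
  using subset_bops unfolding bops_def by blast

lemma linear_mem: "T \<in> \<A> \<Longrightarrow> linear T"
  using bounded_linear_mem bounded_linear.linear by blast

lemma mem_commute_C: "T \<in> \<A> \<Longrightarrow> K \<in> C \<Longrightarrow> T \<circ> K = K \<circ> T"
  using subset_bops unfolding bops_def by blast

lemma bounded_linear_J: "bounded_linear J"
  using scalars unfolding complex_structure_def by (auto simp: bounded_linear_zero)

lemma linear_J: "linear J"
  using bounded_linear_J bounded_linear.linear by blast

lemma J_cases: "J = (\<lambda>x. 0) \<or> (\<forall>x. J (J x) = - x)"
  using scalars unfolding complex_structure_def by auto

lemma mem_commute_J:
  assumes "T \<in> \<A>" shows "T (J z) = J (T z)"
  using scalars
proof
  assume "C = {} \<and> J = (\<lambda>x. 0)"
  then show ?thesis using linear_0[OF linear_mem[OF assms]] by simp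
next
  assume "complex_structure J \<and> C = {J}"
  then show ?thesis using mem_commute_C[OF assms, of J] by (metis comp_apply singletonI)
qed

lemma J_mem: "J \<in> \<A>"
  using scalars
proof
  assume "C = {} \<and> J = (\<lambda>x. 0)"
  then show ?thesis using scaleR_mem[OF id_mem, of 0] by simp
next
  assume "complex_structure J \<and> C = {J}"
  then show ?thesis using C_comp_mem[OF _ id_mem, of J] by simp
qed

lemma alg_linear_comp_J:
  assumes \<phi>: "alg_linear C \<A> \<phi>" and T: "T \<in> \<A>"
  shows "\<phi> (J \<circ> T) = J \<circ> \<phi> T"
  using scalars
proof
  assume J: "C = {} \<and> J = (\<lambda>x. 0)"
  have "\<phi> (\<lambda>x. 0 *\<^sub>R T x) = (\<lambda>x. 0 *\<^sub>R \<phi> T x)"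
    using \<phi> T unfolding alg_linear_def by blast
  then show ?thesis using J by (simp add: comp_def)
next
  assume "complex_structure J \<and> C = {J}"
  then show ?thesis using \<phi> T unfolding alg_linear_def by blast
qed

lemma diff_mem: "S \<in> \<A> \<Longrightarrow> T \<in> \<A> \<Longrightarrow> (\<lambda>x. S x - T x) \<in> \<A>"
  using add_mem[of S "\<lambda>x. (-1) *\<^sub>R T x"] scaleR_mem[of T "-1"] by simp

lemma linear_C: "K \<in> C \<Longrightarrow> linear K"
  using scalars linear_J by auto

lemma app_Lop_mem: "T \<in> \<A> \<Longrightarrow> app (Lop T) = T"
  by (rule app_Lop[OF linear_mem])

lemma app_Lop_J [simp]: "app (Lop J) = J"
  by (rule app_Lop[OF linear_J])

lemma unital_subalgebra_lop: "unital_subalgebra (app -` \<A>)"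
  by unfold_locales (simp_all add: id_mem add_mem comp_mem scaleR_mem)

end

locale standard_operator_algebra_functional = standard_operator_algebra C \<A> J for C \<A> J +
  fixes f :: "'a::banach \<Rightarrow> real" and w :: 'a
  assumes bounded_linear_f: "bounded_linear f" and f_w: "f w = 1" and f_J_w: "f (J w) = 0"

sublocale standard_operator_algebra_functional \<subseteq> rank_one_functional J f w
  using linear_J J_cases bounded_linear.linear[OF bounded_linear_f] f_w f_J_w
  by (rule rank_one_functional.intro)

lemma alg_linearD:
  assumes "alg_linear C \<A> \<phi>"
  shows alg_linear_mem: "T \<in> \<A> \<Longrightarrow> \<phi> T \<in> \<A>"
    and alg_linear_add: "S \<in> \<A> \<Longrightarrow> T \<in> \<A> \<Longrightarrow> \<phi> (\<lambda>x. S x + T x) = (\<lambda>x. \<phi> S x + \<phi> T x)"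
    and alg_linear_scaleR: "T \<in> \<A> \<Longrightarrow> \<phi> (\<lambda>x. c *\<^sub>R T x) = (\<lambda>x. c *\<^sub>R \<phi> T x)"
    and alg_linear_comp_C: "K \<in> C \<Longrightarrow> T \<in> \<A> \<Longrightarrow> \<phi> (K \<circ> T) = K \<circ> \<phi> T"
  using assms unfolding alg_linear_def by blast+

context standard_operator_algebra_functional
begin

lemma rank_one_mem: "rank_one x \<in> \<A>"
proof -
  have "bounded_linear (\<lambda>y. f y *\<^sub>R x)" "bounded_linear (\<lambda>y. f (J y) *\<^sub>R J x)"
    using bounded_linear_compose[OF bounded_linear_scaleR_left bounded_linear_f]
      bounded_linear_compose[OF bounded_linear_scaleR_left bounded_linear_compose[OF bounded_linear_f bounded_linear_J]]
    by blast+
  then have "bounded_linear (rank_one x)"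
    unfolding rank_one_def by (rule bounded_linear_sub)
  moreover have "rank_one x \<circ> K = K \<circ> rank_one x" if "K \<in> C" for K
    using scalars that by (auto simp: comp_def rank_one_J)
  moreover have "range (rank_one x) \<subseteq> span {x, J x}"
    unfolding rank_one_def by (auto intro: span_diff span_scale span_base)
  ultimately have "rank_one x \<in> fin_rank C"
    unfolding fin_rank_def bops_def by (intro CollectI conjI exI[of _ "{x, J x}"]) auto
  then show ?thesis using fin_rank_subset by blast
qed

lemma app_Lop_rank_one [simp]: "app (Lop (rank_one x)) = rank_one x"
  by (rule app_Lop[OF linear_rank_one])

lemma minimal_idempotent_rank_one:
  assumes u: "f u = 1" "f (J u) = 0"
  shows "minimal_idempotent (app -` \<A>) (Lop (rank_one u))"
  unfolding minimal_idempotent_def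
proof (intro conjI ballI impI)
  show "Lop (rank_one u) \<in> app -` \<A>" by (simp add: rank_one_mem)
  show "Lop (rank_one u) * Lop (rank_one u) = Lop (rank_one u)"
    by (simp add: lop_eq_iff rank_one_idempotent[OF u])
next
  fix S T assume "S \<in> app -` \<A>" "T \<in> app -` \<A>"
    and "S * Lop (rank_one u) = S" "Lop (rank_one u) * T = T" "S * T = 0"
  then show "S = 0 \<or> T = 0"
    using rank_one_idempotent_no_zero_divisors[where S = "app S" and T = "app T", OF u linear_mem mem_commute_J]
    by (simp add: lop_eq_iff)
qed


lemma lop_mult_rank_one: "T \<in> app -` \<A> \<Longrightarrow> T * Lop (rank_one x) = Lop (rank_one (app T x))"
  by (simp add: lop_eq_iff comp_rank_one linear_mem mem_commute_J)

lemma lop_rank_one_separating: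
  assumes "\<And>x. W * Lop (rank_one x) = 0" shows "W = 0"
proof -
  have "app W x = 0" for x
    using arg_cong[OF assms[of x], of "\<lambda>t. app t w"] by (simp add: rank_one_w)
  then show ?thesis by (simp add: lop_eq_iff fun_eq_iff)
qed

lemma lop_rank_one_span:
  "\<exists>P1 P2 a b. minimal_idempotent (app -` \<A>) P1 \<and> minimal_idempotent (app -` \<A>) P2 \<and>
     Lop (rank_one x) = P1 + a *\<^sub>R P2 + b *\<^sub>R (Lop J * P2)"
proof -
  obtain u a b where u: "f u = 1" "f (J u) = 0"
    and x: "rank_one x = (\<lambda>y. rank_one u y + a *\<^sub>R rank_one w y + b *\<^sub>R J (rank_one w y))"
    by (rule rank_one_decomposition)
  have "Lop (rank_one x) = Lop (rank_one u) + a *\<^sub>R Lop (rank_one w) + b *\<^sub>R (Lop J * Lop (rank_one w))"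
    unfolding lop_eq_iff by (simp only: app_Lop_rank_one) (simp add: x app_Lop_J)
  then show ?thesis
    using minimal_idempotent_rank_one[OF u] minimal_idempotent_rank_one[OF f_w f_J_w] by blast
qed
context
  fixes \<phi> :: "('a \<Rightarrow> 'a) \<Rightarrow> 'a \<Rightarrow> 'a"
  assumes \<phi>: "alg_linear C \<A> \<phi>"
    and zero_jordan: "\<forall>A\<in>\<A>. \<forall>B\<in>\<A>. A \<circ> B = (\<lambda>x. 0) \<and> B \<circ> A = (\<lambda>x. 0) \<longrightarrow>
           (\<lambda>x. jordan (\<phi> A) B x + jordan A (\<phi> B) x) = (\<lambda>x. 0)"
begin

lemma app_Lop_map: "T \<in> \<A> \<Longrightarrow> app (Lop (\<phi> T)) = \<phi> T"
  by (simp add: app_Lop_mem alg_linear_mem[OF \<phi>])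

lemma zero_product_jordan_separated_lop:
  "zero_product_jordan_separated (app -` \<A>) (\<lambda>t. Lop (\<phi> (app t))) (Lop J) (range (\<lambda>x. Lop (rank_one x)))"
proof -
  interpret lop: unital_subalgebra "app -` \<A>" by (rule unital_subalgebra_lop)
  show ?thesis
  proof unfold_locales
    fix x assume "x \<in> app -` \<A>"
    then show "Lop (\<phi> (app x)) \<in> app -` \<A>" by (simp add: app_Lop_map alg_linear_mem[OF \<phi>])
  next
    fix x y assume x: "x \<in> app -` \<A>" and y: "y \<in> app -` \<A>"
    then have xy: "app (x + y) \<in> \<A>" by (simp add: add_mem)
    then show "Lop (\<phi> (app (x + y))) = Lop (\<phi> (app x)) + Lop (\<phi> (app y))"
      unfolding lop_eq_iff app_Lop_map[OF xy] using x y by (simp add: app_Lop_map alg_linear_add[OF \<phi>])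
  next
    fix x a assume x: "x \<in> app -` \<A>"
    then have ax: "app (a *\<^sub>R x) \<in> \<A>" by (simp add: scaleR_mem)
    then show "Lop (\<phi> (app (a *\<^sub>R x))) = a *\<^sub>R Lop (\<phi> (app x))"
      unfolding lop_eq_iff app_Lop_map[OF ax] using x by (simp add: app_Lop_map alg_linear_scaleR[OF \<phi>])
  next
    fix A B assume "A \<in> app -` \<A>" "B \<in> app -` \<A>" "A * B = 0" "B * A = 0"
    then show "Lop (\<phi> (app A)) * B + B * Lop (\<phi> (app A)) + A * Lop (\<phi> (app B)) + Lop (\<phi> (app B)) * A = 0"
      using zero_jordan by (simp add: lop_eq_iff app_Lop_map jordan_def fun_eq_iff add.assoc)
  next
    show "Lop J \<in> app -` \<A>" by (simp add: J_mem)
  next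
    fix x assume "x \<in> app -` \<A>"
    then show "Lop J * x = x * Lop J" by (simp add: lop_eq_iff fun_eq_iff mem_commute_J)
  next
    fix x assume x: "x \<in> app -` \<A>"
    have "J \<circ> app x \<in> \<A>" using x J_mem comp_mem by simp
    then show "Lop (\<phi> (app (Lop J * x))) = Lop J * Lop (\<phi> (app x))"
      using x by (simp add: lop_eq_iff app_Lop_map alg_linear_comp_J[OF \<phi>] app_Lop_mem comp_mem J_mem
          alg_linear_mem[OF \<phi>])
  next
    show "range (\<lambda>x. Lop (rank_one x)) \<subseteq> app -` \<A>" by (auto simp: rank_one_mem)
  next
    fix T e assume "T \<in> app -` \<A>" and "e \<in> range (\<lambda>x. Lop (rank_one x))"
    then show "T * e \<in> range (\<lambda>x. Lop (rank_one x))" by (auto simp: lop_mult_rank_one)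
  next
    fix W assume "\<And>e. e \<in> range (\<lambda>x. Lop (rank_one x)) \<Longrightarrow> W * e = 0"
    then show "W = 0" by (rule lop_rank_one_separating) blast
  next
    fix e assume "e \<in> range (\<lambda>x. Lop (rank_one x))"
    then show "\<exists>P1 P2 a b. minimal_idempotent (app -` \<A>) P1 \<and> minimal_idempotent (app -` \<A>) P2 \<and>
        e = P1 + a *\<^sub>R P2 + b *\<^sub>R (Lop J * P2)"
      using lop_rank_one_span by blast
  qed
qed

lemma map_id_central:
  assumes T: "T \<in> \<A>"
  shows "\<phi> id \<circ> T = T \<circ> \<phi> id"
proof -
  interpret lop: zero_product_jordan_separated "app -` \<A>" "\<lambda>t. Lop (\<phi> (app t))" "Lop J"
      "range (\<lambda>x. Lop (rank_one x))"
    by (rule zero_product_jordan_separated_lop)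
  show ?thesis
    using arg_cong[OF lop.map_one_central[of "Lop T"], of app] T
    by (simp add: app_Lop_map app_Lop_mem id_mem)
qed

lemma map_comp_centered:
  assumes S: "S \<in> \<A>" and T: "T \<in> \<A>"
  shows "(\<lambda>x. \<phi> (S \<circ> T) x - \<phi> id (S (T x))) =
    (\<lambda>x. (\<phi> S (T x) - \<phi> id (S (T x))) + S (\<phi> T x - \<phi> id (T x)))"
proof -
  interpret lop: zero_product_jordan_separated "app -` \<A>" "\<lambda>t. Lop (\<phi> (app t))" "Lop J"
      "range (\<lambda>x. Lop (rank_one x))"
    by (rule zero_product_jordan_separated_lop)
  show ?thesis
    using arg_cong[OF lop.map_mult_centered[of "Lop S" "Lop T"], of app] S T
    by (simp add: app_Lop_map app_Lop_mem id_mem comp_mem)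
qed

end

end

context standard_operator_algebra
begin

theorem zero_product_jordan_central_leibniz:
  assumes \<phi>: "alg_linear C \<A> \<phi>"
    and zero_jordan: "\<forall>A\<in>\<A>. \<forall>B\<in>\<A>. A \<circ> B = (\<lambda>x. 0) \<and> B \<circ> A = (\<lambda>x. 0) \<longrightarrow>
           (\<lambda>x. jordan (\<phi> A) B x + jordan A (\<phi> B) x) = (\<lambda>x. 0)"
  shows "(\<forall>T\<in>\<A>. \<phi> id \<circ> T = T \<circ> \<phi> id) \<and>
    (\<forall>S\<in>\<A>. \<forall>T\<in>\<A>. (\<lambda>x. \<phi> (S \<circ> T) x - \<phi> id (S (T x))) =
       (\<lambda>x. (\<phi> S (T x) - \<phi> id (S (T x))) + S (\<phi> T x - \<phi> id (T x))))"
proof (cases "\<exists>z::'a. z \<noteq> 0")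
  case True
  then obtain z :: 'a where "z \<noteq> 0" by blast
  then obtain f :: "'a \<Rightarrow> real" and w where "bounded_linear f" "f w = 1" "f (J w) = 0"
    by (rule exists_normalized_functional[OF linear_J J_cases])
  then interpret standard_operator_algebra_functional C \<A> J f w
    by (intro standard_operator_algebra_functional.intro standard_operator_algebra_axioms
        standard_operator_algebra_functional_axioms.intro)
  show ?thesis
    by (intro conjI ballI map_id_central[OF \<phi> zero_jordan] map_comp_centered[OF \<phi> zero_jordan])
next
  case False
  then have "(g :: 'a \<Rightarrow> 'a) = h" for g h by (metis ext)
  then show ?thesis by (intro conjI ballI)
qed

lemma is_multiplier_comp_central:
  assumes c: "c \<in> \<A>" and central: "\<And>T. T \<in> \<A> \<Longrightarrow> c \<circ> T = T \<circ> c"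
  shows "is_multiplier C \<A> (\<lambda>T. c \<circ> T)"
  unfolding is_multiplier_def alg_linear_def
proof (intro conjI ballI allI)
  fix T assume "T \<in> \<A>"
  then show "c \<circ> T \<in> \<A>" "c \<circ> T = (c \<circ> id) \<circ> T" "c \<circ> T = T \<circ> (c \<circ> id)"
    by (simp_all add: comp_mem c central)
next
  fix S T
  show "c \<circ> (\<lambda>x. S x + T x) = (\<lambda>x. (c \<circ> S) x + (c \<circ> T) x)"
    by (simp add: fun_eq_iff linear_add[OF linear_mem[OF c]])
next
  fix a T
  show "c \<circ> (\<lambda>x. a *\<^sub>R T x) = (\<lambda>x. a *\<^sub>R (c \<circ> T) x)"
    by (simp add: fun_eq_iff linear_scale[OF linear_mem[OF c]])
next
  fix K T assume K: "K \<in> C"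
  show "c \<circ> (K \<circ> T) = K \<circ> (c \<circ> T)"
    by (simp only: comp_assoc[symmetric] mem_commute_C[OF c K])
qed

lemma alg_linear_diff:
  assumes \<phi>: "alg_linear C \<A> \<phi>" and \<psi>: "alg_linear C \<A> \<psi>"
  shows "alg_linear C \<A> (\<lambda>T x. \<phi> T x - \<psi> T x)"
  unfolding alg_linear_def
proof (intro conjI ballI allI)
  fix T assume "T \<in> \<A>"
  then show "(\<lambda>x. \<phi> T x - \<psi> T x) \<in> \<A>"
    by (intro diff_mem alg_linear_mem[OF \<phi>] alg_linear_mem[OF \<psi>])
next
  fix S T assume "S \<in> \<A>" "T \<in> \<A>"
  then show "(\<lambda>x. \<phi> (\<lambda>x. S x + T x) x - \<psi> (\<lambda>x. S x + T x) x) =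
      (\<lambda>x. (\<phi> S x - \<psi> S x) + (\<phi> T x - \<psi> T x))"
    by (simp add: alg_linear_add[OF \<phi>] alg_linear_add[OF \<psi>] algebra_simps)
next
  fix a T assume "T \<in> \<A>"
  then show "(\<lambda>x. \<phi> (\<lambda>x. a *\<^sub>R T x) x - \<psi> (\<lambda>x. a *\<^sub>R T x) x) = (\<lambda>x. a *\<^sub>R (\<phi> T x - \<psi> T x))"
    by (simp add: alg_linear_scaleR[OF \<phi>] alg_linear_scaleR[OF \<psi>] scaleR_diff_right)
next
  fix K T assume K: "K \<in> C" and T: "T \<in> \<A>"
  show "(\<lambda>x. \<phi> (K \<circ> T) x - \<psi> (K \<circ> T) x) = K \<circ> (\<lambda>x. \<phi> T x - \<psi> T x)"
    using alg_linear_comp_C[OF \<phi> K T] alg_linear_comp_C[OF \<psi> K T]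
    by (simp add: fun_eq_iff linear_diff[OF linear_C[OF K]])
qed

theorem zero_product_jordan_decomposition:
  assumes \<phi>: "alg_linear C \<A> \<phi>"
    and zero_jordan: "\<forall>A\<in>\<A>. \<forall>B\<in>\<A>. A \<circ> B = (\<lambda>x. 0) \<and> B \<circ> A = (\<lambda>x. 0) \<longrightarrow>
           (\<lambda>x. jordan (\<phi> A) B x + jordan A (\<phi> B) x) = (\<lambda>x. 0)"
  shows "is_multiplier C \<A> (\<lambda>T. \<phi> id \<circ> T)"
    and "is_derivation C \<A> (\<lambda>T x. \<phi> T x - \<phi> id (T x))"
proof -
  note central_leibniz = zero_product_jordan_central_leibniz[OF \<phi> zero_jordan]
  have central: "\<And>T. T \<in> \<A> \<Longrightarrow> \<phi> id \<circ> T = T \<circ> \<phi> id"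
    using central_leibniz by blast
  show multiplier: "is_multiplier C \<A> (\<lambda>T. \<phi> id \<circ> T)"
    by (rule is_multiplier_comp_central[OF alg_linear_mem[OF \<phi> id_mem] central])
  have "alg_linear C \<A> (\<lambda>T x. \<phi> T x - (\<phi> id \<circ> T) x)"
    using alg_linear_diff[OF \<phi>] multiplier unfolding is_multiplier_def by blast
  then show "is_derivation C \<A> (\<lambda>T x. \<phi> T x - \<phi> id (T x))"
    using central_leibniz[THEN conjunct2] unfolding is_derivation_def by (simp add: comp_def)
qed

end

theorem corollary2p10:
  fixes C :: "('a::banach \<Rightarrow> 'a) set" and \<A> :: "('a \<Rightarrow> 'a) set"
    and \<phi> :: "('a \<Rightarrow> 'a) \<Rightarrow> ('a \<Rightarrow> 'a)"
  assumes "scalar_data C"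
    and "unital_standard_algebra C \<A>"
    and "alg_linear C \<A> \<phi>"
    and "\<forall>A\<in>\<A>. \<forall>B\<in>\<A>. A \<circ> B = (\<lambda>x. 0) \<and> B \<circ> A = (\<lambda>x. 0) \<longrightarrow>
           (\<lambda>x. jordan (\<phi> A) B x + jordan A (\<phi> B) x) = (\<lambda>x. 0)"
  shows "(\<exists>\<delta> \<eta>. is_derivation C \<A> \<delta> \<and> is_multiplier C \<A> \<eta> \<and>
            (\<forall>A\<in>\<A>. \<phi> A = (\<lambda>x. \<delta> A x + \<eta> A x)))
       \<and> (\<phi> id = (\<lambda>x. 0) \<longrightarrow> is_derivation C \<A> \<phi>)"
proof -
  obtain J where "(C = {} \<and> J = (\<lambda>x. 0)) \<or> (complex_structure J \<and> C = {J})"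
    using scalar_data_obtain[OF assms(1)] .
  with assms(2) interpret standard_operator_algebra C \<A> J
    by (rule standard_operator_algebra.intro)
  let ?\<eta> = "\<lambda>T. \<phi> id \<circ> T" and ?\<delta> = "\<lambda>T x. \<phi> T x - \<phi> id (T x)"
  have \<eta>: "is_multiplier C \<A> ?\<eta>" and \<delta>: "is_derivation C \<A> ?\<delta>"
    by (fact zero_product_jordan_decomposition[OF assms(3,4)])+
  show ?thesis
  proof (intro conjI impI)
    show "\<exists>\<delta> \<eta>. is_derivation C \<A> \<delta> \<and> is_multiplier C \<A> \<eta> \<and> (\<forall>A\<in>\<A>. \<phi> A = (\<lambda>x. \<delta> A x + \<eta> A x))"
      using \<delta> \<eta> by (intro exI[of _ ?\<delta>] exI[of _ ?\<eta>]) simp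
    show "is_derivation C \<A> \<phi>" if "\<phi> id = (\<lambda>x. 0)"
      using \<delta> that by simp
  qed
qed

end
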